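(* Let $\boldsymbol\alpha\in\mathbb C^d$. If the Zariski closure of the equivalence class $[\boldsymbol\alpha]$ is all of $\mathbb C^d$, then $\mathbb R_{>0}(\boldsymbol\alpha)$ is nonempty.
   Context: $A\subset\mathbb Z^d$ is a finite set generating the group $\mathbb Z^d$; $\mathbb NA$ its monoid. For a face $\tau$ of the cone $\mathbb R_{\ge0}A$ and $\boldsymbol\alpha\in\mathbb C^d$, $E_\tau(\boldsymbol\alpha)=\{\boldsymbol\lambda\in\mathbb C(A\cap\tau)/\mathbb Z(A\cap\tau):\boldsymbol\alpha-\boldsymbol\lambda\in\mathbb NA+\mathbb Z(A\cap\tau)\}$; $\boldsymbol\alpha\sim\boldsymbol\beta$ iff $E_\tau(\boldsymbol\alpha)=E_\tau(\boldsymbol\beta)$ for all faces $\tau$, and $[\boldsymbol\alpha]\subseteq\mathbb C^d$ is the equivalence class of $\boldsymbol\alpha$. For a facet $\sigma$, $F_\sigma$ is the unique linear form (extended $\mathbb C$-linearly) with $F_\sigma(\mathbb R_{\ge0}A)\ge0$, $F_\sigma(\sigma)=0$, $F_\sigma(\mathbb Z^d)=\mathbb Z$. $\mathcal F_+(\boldsymbol\alpha)=\{\sigma:F_\sigma(\boldsymbol\alpha)\in F_\sigma(\mathbb NA)\}$, $\mathcal F_-(\boldsymbol\alpha)=\{\sigma:F_\sigma(\boldsymbol\alpha)\in\mathbb Z\setminus F_\sigma(\mathbb NA)\}$, and $\mathbb R_{>0}(\boldsymbol\alpha)=\{\boldsymbol\gamma\in\mathbb R^d:F_\sigma(\boldsymbol\gamma)>0\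 (\sigma\in\mathcal F_+(\boldsymbol\alpha)),\ F_\sigma(\boldsymbol\gamma)<0\ (\sigma\in\mathcal F_-(\boldsymbol\alpha))\}$. *)

theory Defs
  imports "HOL-Analysis.Analysis"
begin

text \<open>Lattice points of Z^d are vectors int^'d; the index type 'd is the dimension d.\<close>

definition rvec :: "int ^ 'd \<Rightarrow> real ^ 'd" where
  "rvec v = (\<chi> i. of_int (v $ i))"

definition cvec :: "int ^ 'd \<Rightarrow> complex ^ 'd" where
  "cvec v = (\<chi> i. of_int (v $ i))"

definition int_span :: "(int ^ 'd) set \<Rightarrow> (int ^ 'd) set" where
  "int_span B = {(\<Sum>a\<in>B. k a *s a) | k. True}"

definition nat_monoid :: "(int ^ 'd) set \<Rightarrow> (int ^ 'd) set" where
  "nat_monoid A = {(\<Sum>a\<in>A. of_nat (n a) *s a) | n :: int ^ 'd \<Rightarrow> nat. True}"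

definition cplx_span :: "(int ^ 'd) set \<Rightarrow> (complex ^ 'd) set" where
  "cplx_span B = {(\<Sum>a\<in>B. c a *s cvec a) | c. True}"

definition pos_cone :: "(int ^ 'd) set \<Rightarrow> (real ^ 'd) set" where
  "pos_cone A = {(\<Sum>a\<in>A. c a *\<^sub>R rvec a) | c. \<forall>a\<in>A. c a \<ge> 0}"

text \<open>Faces of the cone (nonempty faces in the sense of convex geometry; for a
polyhedral cone these are exactly the polyhedral faces).\<close>

definition cone_face :: "(int ^ 'd) set \<Rightarrow> (real ^ 'd) set \<Rightarrow> bool" where
  "cone_face A \<tau> \<longleftrightarrow> \<tau> face_of pos_cone A \<and> \<tau> \<noteq> {}"

definition A_in :: "(int ^ 'd) set \<Rightarrow> (real ^ 'd) set \<Rightarrow> (int ^ 'd) set" where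
  "A_in A \<tau> = {a \<in> A. rvec a \<in> \<tau>}"

text \<open>E_tau(alpha), represented as the union of the cosets in C(A\<inter>tau)/Z(A\<inter>tau)
it consists of (this set is Z(A\<inter>tau)-invariant, so equality of these unions is
equality of the sets of cosets).\<close>

definition E_set :: "(int ^ 'd) set \<Rightarrow> (real ^ 'd) set \<Rightarrow> complex ^ 'd \<Rightarrow> (complex ^ 'd) set" where
  "E_set A \<tau> \<alpha> = {l \<in> cplx_span (A_in A \<tau>).
      \<exists>v\<in>nat_monoid A. \<exists>z\<in>int_span (A_in A \<tau>). \<alpha> - l = cvec (v + z)}"

definition equiv_class :: "(int ^ 'd) set \<Rightarrow> complex ^ 'd \<Rightarrow> (complex ^ 'd) set" where
  "equiv_class A \<alpha> = {\<beta>. \<forall>\<tau>. cone_face A \<tau> \<longrightarrow> E_set A \<tau> \<alpha> = E_set A \<tau> \<beta>}"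

definition poly_fun :: "(complex ^ 'd \<Rightarrow> complex) \<Rightarrow> bool" where
  "poly_fun f \<longleftrightarrow> (\<exists>S c. finite (S :: ('d \<Rightarrow> nat) set) \<and>
      f = (\<lambda>x. \<Sum>m\<in>S. c m * (\<Prod>i\<in>UNIV. (x $ i) ^ (m i))))"

definition zariski_closure :: "(complex ^ 'd) set \<Rightarrow> (complex ^ 'd) set" where
  "zariski_closure S = {x. \<forall>f. poly_fun f \<and> (\<forall>y\<in>S. f y = 0) \<longrightarrow> f x = 0}"

text \<open>The primitive integral support form F_sigma of a facet sigma, given by a
vector w with F_sigma(x) = w \<bullet> x.\<close>

definition is_facet_form :: "(int ^ 'd) set \<Rightarrow> (real ^ 'd) set \<Rightarrow> real ^ 'd \<Rightarrow> bool" where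
  "is_facet_form A \<sigma> w \<longleftrightarrow> (\<forall>x\<in>pos_cone A. w \<bullet> x \<ge> 0) \<and> (\<forall>x\<in>\<sigma>. w \<bullet> x = 0)
      \<and> (\<lambda>z. w \<bullet> rvec z) ` UNIV = \<int>"

definition facet_form :: "(int ^ 'd) set \<Rightarrow> (real ^ 'd) set \<Rightarrow> real ^ 'd" where
  "facet_form A \<sigma> = (THE w. is_facet_form A \<sigma> w)"

definition cform :: "real ^ 'd \<Rightarrow> complex ^ 'd \<Rightarrow> complex" where
  "cform w \<alpha> = (\<Sum>i\<in>UNIV. complex_of_real (w $ i) * \<alpha> $ i)"

definition F_plus :: "(int ^ 'd) set \<Rightarrow> complex ^ 'd \<Rightarrow> (real ^ 'd) set set" where
  "F_plus A \<alpha> = {\<sigma>. \<sigma> facet_of pos_cone A \<and>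
      cform (facet_form A \<sigma>) \<alpha> \<in> (\<lambda>v. cform (facet_form A \<sigma>) (cvec v)) ` nat_monoid A}"

definition F_minus :: "(int ^ 'd) set \<Rightarrow> complex ^ 'd \<Rightarrow> (real ^ 'd) set set" where
  "F_minus A \<alpha> = {\<sigma>. \<sigma> facet_of pos_cone A \<and> cform (facet_form A \<sigma>) \<alpha> \<in> \<int> \<and>
      cform (facet_form A \<sigma>) \<alpha> \<notin> (\<lambda>v. cform (facet_form A \<sigma>) (cvec v)) ` nat_monoid A}"

definition R_pos :: "(int ^ 'd) set \<Rightarrow> complex ^ 'd \<Rightarrow> (real ^ 'd) set" where
  "R_pos A \<alpha> = {\<gamma>. (\<forall>\<sigma>\<in>F_plus A \<alpha>. facet_form A \<sigma> \<bullet> \<gamma> > 0) \<and>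
      (\<forall>\<sigma>\<in>F_minus A \<alpha>. facet_form A \<sigma> \<bullet> \<gamma> < 0)}"

end

(*
  Write u_sigma = F_sigma for sigma in F_+(alpha) and u_sigma = -F_sigma for sigma in F_-(alpha).
  The kernel of F_sigma on C^d is spanned by the generators in sigma, so E_sigma(beta) is
  nonempty exactly when F_sigma(beta) lies in F_sigma(NA).  Every beta in [alpha] is a lattice
  translate alpha + z, and since E_sigma(beta) = E_sigma(alpha), u_sigma(z) is bounded below:
  for sigma in F_+ because F_sigma(NA) >= 0, for sigma in F_- because F_sigma(NA) contains all
  large integers.  If 0 is not in the convex hull of the u_sigma, a separating hyperplane gives
  a point of R_{>0}(alpha).  Otherwise a convex relation sum lambda_sigma u_sigma = 0 bounds some
  u_sigma from above as well, so the integer u_sigma(z) takes only finitely many values on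
  [alpha]; the product of the corresponding affine forms is a nonzero polynomial vanishing on
  [alpha], against its Zariski density.
*)
theory Submission
  imports Defs
begin

section \<open>Lattice vectors, spans and linear forms\<close>

lemma rvec_add: "rvec (x + y) = rvec x + rvec y"
  by (simp add: rvec_def vec_eq_iff)

lemma rvec_diff: "rvec (x - y) = rvec x - rvec y"
  by (simp add: rvec_def vec_eq_iff)

lemma rvec_smult: "rvec (k *s x) = of_int k *\<^sub>R rvec x"
  by (simp add: rvec_def vec_eq_iff)

lemma rvec_sum: "rvec (\<Sum>a\<in>S. f a) = (\<Sum>a\<in>S. rvec (f a))"
  by (induction S rule: infinite_finite_induct) (auto simp: rvec_add rvec_def vec_eq_iff)

lemma rvec_axis: "rvec (axis i 1) = axis i 1"
  by (simp add: rvec_def vec_eq_iff axis_def)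

lemma inner_rvec_Ints: "(\<And>i. w $ i \<in> \<int>) \<Longrightarrow> w \<bullet> rvec z \<in> \<int>"
  unfolding inner_vec_def by (intro Ints_sum Ints_mult) (simp_all add: rvec_def)

lemma cvec_add: "cvec (x + y) = cvec x + cvec y"
  by (simp add: cvec_def vec_eq_iff)

lemma cvec_smult: "cvec (k *s x) = of_int k *s cvec x"
  by (simp add: cvec_def vec_eq_iff)

lemma cvec_sum: "cvec (\<Sum>a\<in>S. f a) = (\<Sum>a\<in>S. cvec (f a))"
  by (induction S rule: infinite_finite_induct) (auto simp: cvec_add cvec_def vec_eq_iff)

lemma cvec_axis: "cvec (axis i 1) = axis i 1"
  by (simp add: cvec_def vec_eq_iff axis_def)

lemma cform_add: "cform w (x + y) = cform w x + cform w y"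
  by (simp add: cform_def algebra_simps sum.distrib)

lemma cform_diff: "cform w (x - y) = cform w x - cform w y"
  by (simp add: cform_def algebra_simps sum_subtractf)

lemma cform_smult: "cform w (c *s x) = c * cform w x"
  by (simp add: cform_def sum_distrib_left algebra_simps)

lemma cform_0: "cform w 0 = 0"
  by (simp add: cform_def)

lemma cform_sum: "cform w (\<Sum>a\<in>S. f a) = (\<Sum>a\<in>S. cform w (f a))"
  by (induction S rule: infinite_finite_induct) (simp_all add: cform_add cform_0)

lemma cform_cvec: "cform w (cvec z) = of_real (w \<bullet> rvec z)"
  by (simp add: cform_def cvec_def rvec_def inner_vec_def)

lemma cform_shift: "cform w (\<alpha> + cvec z) = cform w \<alpha> + of_real (w \<bullet> rvec z)"
  by (simp add: cform_add cform_cvec)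

lemma cform_axis: "cform w (axis i 1) = of_real (w $ i)"
  using cform_cvec[of w "axis i 1"] by (simp add: cvec_axis rvec_axis inner_axis)

lemma Re_cform: "Re (cform w x) = w \<bullet> (\<chi> i. Re (x $ i))"
  by (simp add: cform_def inner_vec_def)

lemma Im_cform: "Im (cform w x) = w \<bullet> (\<chi> i. Im (x $ i))"
  by (simp add: cform_def inner_vec_def)

lemma vector_smult_sum: "(c::'a::comm_ring_1) *s (\<Sum>a\<in>S. f a) = (\<Sum>a\<in>S. c *s f a)"
  by (induction S rule: infinite_finite_induct) (auto simp: vector_add_ldistrib)

lemma nat_monoid_sumI: "(\<Sum>a\<in>A. of_nat (n a) *s a) \<in> nat_monoid A"
  unfolding nat_monoid_def by blast

lemma nat_monoid_0: "0 \<in> nat_monoid A"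
  using nat_monoid_sumI[where n="\<lambda>_. 0"] by simp

lemma nat_monoid_add:
  assumes "u \<in> nat_monoid A" "v \<in> nat_monoid A"
  shows "u + v \<in> nat_monoid A"
proof -
  obtain m n where "u = (\<Sum>a\<in>A. of_nat (m a) *s a)" "v = (\<Sum>a\<in>A. of_nat (n a) *s a)"
    using assms unfolding nat_monoid_def by blast
  then have "u + v = (\<Sum>a\<in>A. of_nat (m a + n a) *s a)"
    by (simp add: sum.distrib vector_sadd_rdistrib)
  then show ?thesis
    by (simp only: nat_monoid_sumI)
qed

lemma nat_monoid_smult:
  assumes "u \<in> nat_monoid A"
  shows "of_nat k *s u \<in> nat_monoid A"
proof -
  obtain n where "u = (\<Sum>a\<in>A. of_nat (n a) *s a)"
    using assms unfolding nat_monoid_def by blast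
  then have "of_nat k *s u = (\<Sum>a\<in>A. of_nat (k * n a) *s a)"
    by (simp add: vector_smult_sum vector_smult_assoc)
  then show ?thesis
    by (simp only: nat_monoid_sumI)
qed

lemma int_span_eq_nat_monoid_diff:
  assumes "z \<in> int_span A"
  obtains u v where "u \<in> nat_monoid A" "v \<in> nat_monoid A" "z = u - v"
proof -
  obtain k where k: "z = (\<Sum>a\<in>A. k a *s a)"
    using assms unfolding int_span_def by blast
  define u where "u = (\<Sum>a\<in>A. of_nat (nat (k a)) *s a)"
  define v where "v = (\<Sum>a\<in>A. of_nat (nat (- k a)) *s a)"
  have "z = u - v"
    unfolding k u_def v_def sum_subtractf[symmetric]
    by (intro sum.cong refl) (simp add: vec_eq_iff algebra_simps)
  moreover have "u \<in> nat_monoid A" "v \<in> nat_monoid A"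
    unfolding u_def v_def by (rule nat_monoid_sumI)+
  ultimately show ?thesis
    using that by blast
qed

lemma int_span_0: "0 \<in> int_span A"
  unfolding int_span_def by (intro CollectI exI[of _ "\<lambda>_. 0"]) simp

lemma cplx_span_sumI: "(\<Sum>a\<in>A. c a *s cvec a) \<in> cplx_span A"
  unfolding cplx_span_def by blast

lemma cplx_span_0: "0 \<in> cplx_span A"
  using cplx_span_sumI[where c="\<lambda>_. 0"] by simp

lemma cplx_span_add:
  assumes "u \<in> cplx_span A" "v \<in> cplx_span A"
  shows "u + v \<in> cplx_span A"
proof -
  obtain c d where "u = (\<Sum>a\<in>A. c a *s cvec a)" "v = (\<Sum>a\<in>A. d a *s cvec a)"
    using assms unfolding cplx_span_def by blast
  then have "u + v = (\<Sum>a\<in>A. (c a + d a) *s cvec a)"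
    by (simp add: sum.distrib vector_sadd_rdistrib)
  then show ?thesis
    by (simp only: cplx_span_sumI)
qed

lemma cplx_span_smult:
  assumes "u \<in> cplx_span A"
  shows "c *s u \<in> cplx_span A"
proof -
  obtain d where "u = (\<Sum>a\<in>A. d a *s cvec a)"
    using assms unfolding cplx_span_def by blast
  then have "c *s u = (\<Sum>a\<in>A. (c * d a) *s cvec a)"
    by (simp add: vector_smult_sum vector_smult_assoc)
  then show ?thesis
    by (simp only: cplx_span_sumI)
qed

lemma cplx_span_sum:
  "(\<And>i. i \<in> I \<Longrightarrow> f i \<in> cplx_span A) \<Longrightarrow> (\<Sum>i\<in>I. f i) \<in> cplx_span A"
  by (induction I rule: infinite_finite_induct) (simp_all add: cplx_span_0 cplx_span_add)

lemma cvec_in_cplx_span: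
  assumes "z \<in> int_span A"
  shows "cvec z \<in> cplx_span A"
proof -
  obtain k where "z = (\<Sum>a\<in>A. k a *s a)"
    using assms unfolding int_span_def by blast
  then have "cvec z = (\<Sum>a\<in>A. of_int (k a) *s cvec a)"
    by (simp add: cvec_sum cvec_smult)
  then show ?thesis
    by (simp only: cplx_span_sumI)
qed

lemma cplx_span_UNIV:
  assumes "int_span A = UNIV"
  shows "cplx_span A = UNIV"
proof -
  have "x \<in> cplx_span A" for x
  proof -
    have "x = (\<Sum>i\<in>UNIV. x $ i *s cvec (axis i 1))"
      using basis_expansion[of x] by (simp add: cvec_axis)
    also have "\<dots> \<in> cplx_span A"
      by (intro cplx_span_sum cplx_span_smult cvec_in_cplx_span) (simp add: assms)
    finally show ?thesis .
  qed
  then show ?thesis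
    by blast
qed

lemma cform_cplx_span_eq_0:
  assumes "\<And>a. a \<in> B \<Longrightarrow> w \<bullet> rvec a = 0" "x \<in> cplx_span B"
  shows "cform w x = 0"
proof -
  obtain c where "x = (\<Sum>a\<in>B. c a *s cvec a)"
    using assms(2) unfolding cplx_span_def by blast
  then show ?thesis
    by (simp add: cform_sum cform_smult cform_cvec assms(1))
qed

lemma cplx_span_if_cform_eq_0:
  assumes "finite B" "{x. w \<bullet> x = 0} \<subseteq> span (rvec ` B)" "cform w x = 0"
  shows "x \<in> cplx_span B"
proof -
  have real_coeffs: "\<exists>c. y = (\<Sum>a\<in>B. c a *\<^sub>R rvec a)" if "w \<bullet> y = 0" for y
  proof -
    obtain u where "y = (\<Sum>v\<in>rvec ` B. u v *\<^sub>R v)"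
      using assms(1,2) \<open>w \<bullet> y = 0\<close> span_finite[of "rvec ` B"] by auto
    moreover have "inj_on rvec B"
      by (auto simp: inj_on_def rvec_def vec_eq_iff)
    ultimately show ?thesis
      by (auto simp: sum.reindex)
  qed
  obtain r where r: "(\<chi> i. Re (x $ i)) = (\<Sum>a\<in>B. r a *\<^sub>R rvec a)"
    using real_coeffs assms(3) Re_cform by (metis zero_complex.sel(1))
  obtain s where s: "(\<chi> i. Im (x $ i)) = (\<Sum>a\<in>B. s a *\<^sub>R rvec a)"
    using real_coeffs assms(3) Im_cform by (metis zero_complex.sel(2))
  have "x = (\<Sum>a\<in>B. Complex (r a) (s a) *s cvec a)"
  proof (subst vec_eq_iff, intro allI)
    fix j
    have "Re (x $ j) = (\<Sum>a\<in>B. r a * of_int (a $ j))" "Im (x $ j) = (\<Sum>a\<in>B. s a * of_int (a $ j))"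
      using arg_cong[OF r, of "\<lambda>v. v $ j"] arg_cong[OF s, of "\<lambda>v. v $ j"]
      by (simp_all add: rvec_def)
    then show "x $ j = (\<Sum>a\<in>B. Complex (r a) (s a) *s cvec a) $ j"
      by (simp add: complex_eq_iff cvec_def)
  qed
  then show ?thesis
    by (simp only: cplx_span_sumI)
qed

section \<open>Polynomial functions\<close>

definition monomial_fun :: "('d::finite \<Rightarrow> nat) \<Rightarrow> complex ^ 'd \<Rightarrow> complex" where
  "monomial_fun m x = (\<Prod>i\<in>UNIV. (x $ i) ^ (m i))"

lemma poly_fun_iff_monomials:
  "poly_fun f \<longleftrightarrow> (\<exists>S c. finite S \<and> f = (\<lambda>x. \<Sum>m\<in>S. c m * monomial_fun m x))"
  unfolding poly_fun_def monomial_fun_def by simp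

lemma poly_fun_const: "poly_fun (\<lambda>x. c)"
  unfolding poly_fun_iff_monomials
  by (intro exI[of _ "{\<lambda>_. 0}"] exI[of _ "\<lambda>_. c"]) (simp add: monomial_fun_def)

lemma poly_fun_component: "poly_fun (\<lambda>x. x $ j)"
proof -
  have "monomial_fun (\<lambda>i. if i = j then 1 else 0) x = x $ j" for x :: "complex ^ 'a"
    unfolding monomial_fun_def by (simp add: if_distrib prod.delta cong: if_cong)
  then show ?thesis
    unfolding poly_fun_iff_monomials
    by (intro exI[of _ "{\<lambda>i. if i = j then 1 else 0}"] exI[of _ "\<lambda>_. 1"]) simp
qed

lemma poly_fun_add:
  assumes "poly_fun f" "poly_fun g"
  shows "poly_fun (\<lambda>x. f x + g x)"
proof -
  obtain S c where S: "finite S" "f = (\<lambda>x. \<Sum>m\<in>S. c m * monomial_fun m x)"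
    using assms(1) unfolding poly_fun_iff_monomials by blast
  obtain T d where T: "finite T" "g = (\<lambda>x. \<Sum>m\<in>T. d m * monomial_fun m x)"
    using assms(2) unfolding poly_fun_iff_monomials by blast
  have extend: "(\<Sum>m\<in>S \<union> T. (if m \<in> U then e m else 0) * monomial_fun m x) =
      (\<Sum>m\<in>U. e m * monomial_fun m x)" if "U \<subseteq> S \<union> T" for U e x
    by (rule sum.mono_neutral_cong_right) (use S T that in auto)
  have "f x + g x = (\<Sum>m\<in>S \<union> T.
      ((if m \<in> S then c m else 0) + (if m \<in> T then d m else 0)) * monomial_fun m x)" for x
    using extend[of S c x] extend[of T d x] by (simp add: S(2) T(2) distrib_right sum.distrib)
  then show ?thesis
    unfolding poly_fun_iff_monomials using S(1) T(1)
    by (intro exI[of _ "S \<union> T"] exI[of _ "\<lambda>m. (if m \<in> S then c m else 0) + (if m \<in> T then d m else 0)"])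
       (simp add: fun_eq_iff)
qed

lemma poly_fun_mult:
  assumes "poly_fun f" "poly_fun g"
  shows "poly_fun (\<lambda>x. f x * g x)"
proof -
  obtain S c where S: "finite S" "f = (\<lambda>x. \<Sum>m\<in>S. c m * monomial_fun m x)"
    using assms(1) unfolding poly_fun_iff_monomials by blast
  obtain T d where T: "finite T" "g = (\<lambda>x. \<Sum>m\<in>T. d m * monomial_fun m x)"
    using assms(2) unfolding poly_fun_iff_monomials by blast
  define h where "h p = (\<lambda>i. fst p i + snd p i)" for p :: "('a \<Rightarrow> nat) \<times> ('a \<Rightarrow> nat)"
  define e where "e m = (\<Sum>p\<in>{p \<in> S \<times> T. h p = m}. c (fst p) * d (snd p))" for m
  have "f x * g x = (\<Sum>m\<in>h ` (S \<times> T). e m * monomial_fun m x)" for x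
  proof -
    have "f x * g x = (\<Sum>p\<in>S \<times> T. c (fst p) * d (snd p) * monomial_fun (h p) x)"
      unfolding S(2) T(2) sum_product sum.cartesian_product
      by (intro sum.cong) (auto simp: h_def monomial_fun_def power_add prod.distrib mult_ac)
    also have "\<dots> = (\<Sum>m\<in>h ` (S \<times> T). \<Sum>p\<in>{p \<in> S \<times> T. h p = m}.
        c (fst p) * d (snd p) * monomial_fun (h p) x)"
      using S(1) T(1) by (intro sum.image_gen) simp
    also have "\<dots> = (\<Sum>m\<in>h ` (S \<times> T). e m * monomial_fun m x)"
      unfolding e_def sum_distrib_right by (intro sum.cong refl) auto
    finally show ?thesis .
  qed
  then show ?thesis
    unfolding poly_fun_iff_monomials using S(1) T(1)
    by (intro exI[of _ "h ` (S \<times> T)"] exI[of _ e]) (simp add: fun_eq_iff)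
qed

lemma poly_fun_sum: "(\<And>i. i \<in> I \<Longrightarrow> poly_fun (f i)) \<Longrightarrow> poly_fun (\<lambda>x. \<Sum>i\<in>I. f i x)"
  by (induction I rule: infinite_finite_induct) (auto intro: poly_fun_add poly_fun_const)

lemma poly_fun_prod: "(\<And>i. i \<in> I \<Longrightarrow> poly_fun (f i)) \<Longrightarrow> poly_fun (\<lambda>x. \<Prod>i\<in>I. f i x)"
  by (induction I rule: infinite_finite_induct) (auto intro: poly_fun_mult poly_fun_const)

lemma poly_fun_cform_minus_const: "poly_fun (\<lambda>x. cform w x - c)"
  unfolding cform_def diff_conv_add_uminus
  by (intro poly_fun_add poly_fun_sum poly_fun_mult poly_fun_const poly_fun_component)

lemma zariski_closure_subset_cform_finite_values:
  assumes "w \<noteq> 0" "finite V" "\<And>y. y \<in> S \<Longrightarrow> cform w y \<in> V"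
  shows "zariski_closure S \<noteq> UNIV"
proof -
  define p where "p y = (\<Prod>c\<in>V. cform w y - c)" for y
  have "poly_fun p"
    unfolding p_def by (intro poly_fun_prod poly_fun_cform_minus_const)
  moreover have "p y = 0" if "y \<in> S" for y
    unfolding p_def using assms(2) assms(3)[OF that] by (auto intro: prod_zero)
  moreover obtain c0 :: complex where "c0 \<notin> V"
    using ex_new_if_finite[OF infinite_UNIV_char_0 assms(2)] by blast
  obtain i where "w $ i \<noteq> 0"
    using assms(1) by (auto simp: vec_eq_iff)
  define y0 where "y0 = (c0 / of_real (w $ i)) *s axis i 1"
  have "cform w y0 = c0"
    using \<open>w $ i \<noteq> 0\<close> by (simp add: y0_def cform_smult cform_axis)
  then have "p y0 \<noteq> 0"
    unfolding p_def using assms(2) \<open>c0 \<notin> V\<close> by simp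
  ultimately have "y0 \<notin> zariski_closure S"
    unfolding zariski_closure_def by blast
  then show ?thesis
    by blast
qed

section \<open>The cone and its facets\<close>

lemma pos_cone_sumI: "(\<forall>a\<in>A. 0 \<le> c a) \<Longrightarrow> (\<Sum>a\<in>A. c a *\<^sub>R rvec a) \<in> pos_cone A"
  unfolding pos_cone_def by blast

lemma rvec_nat_monoid_in_pos_cone:
  assumes "v \<in> nat_monoid A"
  shows "rvec v \<in> pos_cone A"
proof -
  obtain n where "v = (\<Sum>a\<in>A. of_nat (n a) *s a)"
    using assms unfolding nat_monoid_def by blast
  then have "rvec v = (\<Sum>a\<in>A. real (n a) *\<^sub>R rvec a)"
    by (simp add: rvec_sum rvec_smult)
  then show ?thesis
    by (simp add: pos_cone_sumI)
qed

lemma rvec_in_pos_cone: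
  assumes "finite A" "a \<in> A"
  shows "rvec a \<in> pos_cone A"
proof -
  have "(\<Sum>b\<in>A. (if b = a then 1 else 0) *\<^sub>R rvec b) = (\<Sum>b\<in>A. if b = a then rvec b else 0)"
    by (rule sum.cong) auto
  also have "\<dots> = rvec a"
    using assms by simp
  finally have "(\<Sum>b\<in>A. (if b = a then 1 else 0) *\<^sub>R rvec b) = rvec a" .
  then show ?thesis
    using pos_cone_sumI[of A "\<lambda>b. if b = a then 1 else 0"] by simp
qed

lemma convex_cone_pos_cone: "convex_cone (pos_cone A)"
  unfolding convex_cone_iff
proof (intro conjI ballI allI impI)
  show "0 \<in> pos_cone A"
    using pos_cone_sumI[of A "\<lambda>_. 0"] by simp
next
  fix x y assume "x \<in> pos_cone A" "y \<in> pos_cone A"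
  then obtain c d where "x = (\<Sum>a\<in>A. c a *\<^sub>R rvec a)" "\<forall>a\<in>A. 0 \<le> c a"
    and "y = (\<Sum>a\<in>A. d a *\<^sub>R rvec a)" "\<forall>a\<in>A. 0 \<le> d a"
    unfolding pos_cone_def by blast
  then show "x + y \<in> pos_cone A"
    using pos_cone_sumI[of A "\<lambda>a. c a + d a"] by (simp add: sum.distrib scaleR_add_left)
next
  fix x and t :: real assume "x \<in> pos_cone A" "0 \<le> t"
  then obtain c where "x = (\<Sum>a\<in>A. c a *\<^sub>R rvec a)" "\<forall>a\<in>A. 0 \<le> c a"
    unfolding pos_cone_def by blast
  then show "t *\<^sub>R x \<in> pos_cone A"
    using pos_cone_sumI[of A "\<lambda>a. t * c a"] \<open>0 \<le> t\<close> by (simp add: scaleR_sum_right)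
qed

lemma pos_cone_eq_convex_cone_hull:
  assumes "finite A"
  shows "pos_cone A = convex_cone hull (rvec ` A)"
proof
  show "convex_cone hull rvec ` A \<subseteq> pos_cone A"
    by (rule hull_minimal) (use rvec_in_pos_cone[OF assms] convex_cone_pos_cone in auto)
  have "(\<Sum>a\<in>A. c a *\<^sub>R rvec a) \<in> convex_cone hull rvec ` A" if "\<forall>a\<in>A. 0 \<le> c a" for c
    using that
    by (induction A rule: infinite_finite_induct)
       (auto simp: convex_cone_hull_contains_0 intro!: convex_cone_hull_add convex_cone_hull_mul
             intro: hull_inc hull_mono[THEN subsetD, rotated])
  then show "pos_cone A \<subseteq> convex_cone hull rvec ` A"
    unfolding pos_cone_def by blast
qed

lemma polyhedron_pos_cone: "finite A \<Longrightarrow> polyhedron (pos_cone A)"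
  by (simp add: pos_cone_eq_convex_cone_hull polyhedron_convex_cone_hull)

lemma span_rvec_eq_UNIV:
  assumes "int_span A = UNIV"
  shows "span (rvec ` A) = UNIV"
proof -
  have rvec_span: "rvec z \<in> span (rvec ` A)" for z
  proof -
    obtain k where "z = (\<Sum>a\<in>A. k a *s a)"
      using assms unfolding int_span_def by blast
    then show ?thesis
      by (simp add: rvec_sum rvec_smult) (intro span_sum span_scale span_base imageI)
  qed
  have "x \<in> span (rvec ` A)" for x :: "real ^ 'a"
  proof -
    have "x = (\<Sum>i\<in>UNIV. x $ i *\<^sub>R rvec (axis i 1))"
      using basis_expansion[of x] by (simp add: rvec_axis scalar_mult_eq_scaleR)
    also have "\<dots> \<in> span (rvec ` A)"
      by (intro span_sum span_scale rvec_span)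
    finally show ?thesis .
  qed
  then show ?thesis
    by blast
qed

lemma aff_dim_pos_cone:
  fixes A :: "(int ^ 'd) set"
  assumes "finite A" "int_span A = UNIV"
  shows "aff_dim (pos_cone A) = int CARD('d)"
proof -
  have "affine hull (pos_cone A) = span (pos_cone A)"
    by (intro affine_hull_span_0 hull_inc convex_cone_contains_0 convex_cone_pos_cone)
  also have "\<dots> = UNIV"
    using span_mono[of "rvec ` A" "pos_cone A"] rvec_in_pos_cone[OF assms(1)]
      span_rvec_eq_UNIV[OF assms(2)] by blast
  finally show ?thesis
    using aff_dim_eq_full[of "pos_cone A :: (real ^ 'd) set"] by simp
qed

lemma facet_of_pos_cone_supporting_hyperplane:
  assumes "finite A" "\<sigma> facet_of pos_cone A"
  obtains n where "n \<noteq> 0" "\<forall>x\<in>pos_cone A. 0 \<le> n \<bullet> x" "\<sigma> = pos_cone A \<inter> {x. n \<bullet> x = 0}"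
proof -
  obtain a b where ab: "a \<noteq> 0" "pos_cone A \<subseteq> {x. a \<bullet> x \<le> b}" "\<sigma> = pos_cone A \<inter> {x. a \<bullet> x = b}"
    using facet_of_polyhedron[OF polyhedron_pos_cone[OF assms(1)] assms(2)] by blast
  obtain y where y: "y \<in> \<sigma>"
    using assms(2) by (auto simp: facet_of_def)
  have "0 \<le> b"
    using ab(2) convex_cone_contains_0[OF convex_cone_pos_cone] by force
  moreover have "2 *\<^sub>R y \<in> pos_cone A"
    using ab(3) y convex_cone_pos_cone[of A] by (auto simp: convex_cone_iff)
  then have "a \<bullet> (2 *\<^sub>R y) \<le> b"
    using ab(2) by blast
  ultimately have "b = 0"
    using ab(3) y by simp
  then show ?thesis
    using that[of "- a"] ab by force
qed

text \<open>A point of the cone on a supporting hyperplane is a nonnegative combination in which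
  every generator off the hyperplane has coefficient zero.\<close>

lemma pos_cone_Int_hyperplane_subset_span:
  assumes "finite A" "\<forall>x\<in>pos_cone A. 0 \<le> n \<bullet> x"
  shows "pos_cone A \<inter> {x. n \<bullet> x = 0} \<subseteq> span (rvec ` {a \<in> A. n \<bullet> rvec a = 0})"
proof
  fix x assume "x \<in> pos_cone A \<inter> {x. n \<bullet> x = 0}"
  then obtain c where c: "x = (\<Sum>a\<in>A. c a *\<^sub>R rvec a)" "\<forall>a\<in>A. 0 \<le> c a" and "n \<bullet> x = 0"
    unfolding pos_cone_def by blast
  have nonneg: "\<forall>a\<in>A. 0 \<le> c a * (n \<bullet> rvec a)"
    using c(2) assms(2) rvec_in_pos_cone[OF assms(1)] by simp
  have "(\<Sum>a\<in>A. c a * (n \<bullet> rvec a)) = 0"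
    using \<open>n \<bullet> x = 0\<close> by (simp add: c(1) inner_sum_right)
  then have zero: "\<forall>a\<in>A. c a * (n \<bullet> rvec a) = 0"
    using sum_nonneg_eq_0_iff[OF assms(1), of "\<lambda>a. c a * (n \<bullet> rvec a)"] nonneg by simp
  have "c a *\<^sub>R rvec a \<in> span (rvec ` {a \<in> A. n \<bullet> rvec a = 0})" if "a \<in> A" for a
  proof (cases "c a = 0")
    case False
    then have "rvec a \<in> rvec ` {a \<in> A. n \<bullet> rvec a = 0}"
      using zero that by auto
    then show ?thesis
      by (intro span_scale span_base)
  qed (simp add: span_zero)
  then show "x \<in> span (rvec ` {a \<in> A. n \<bullet> rvec a = 0})"
    unfolding c(1) by (rule span_sum)
qed

lemma facet_of_pos_cone_span_generators:
  fixes A :: "(int ^ 'd) set"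
  assumes "finite A" "int_span A = UNIV" "\<sigma> facet_of pos_cone A"
  obtains n where "n \<noteq> 0" "\<forall>x\<in>pos_cone A. 0 \<le> n \<bullet> x" "\<sigma> \<subseteq> {x. n \<bullet> x = 0}"
    "span (rvec ` A_in A \<sigma>) = {x. n \<bullet> x = 0}"
proof -
  obtain n where n: "n \<noteq> 0" "\<forall>x\<in>pos_cone A. 0 \<le> n \<bullet> x" "\<sigma> = pos_cone A \<inter> {x. n \<bullet> x = 0}"
    using facet_of_pos_cone_supporting_hyperplane[OF assms(1,3)] by blast
  have A_in: "A_in A \<sigma> = {a \<in> A. n \<bullet> rvec a = 0}"
    using n(3) rvec_in_pos_cone[OF assms(1)] by (auto simp: A_in_def)
  have "span (rvec ` A_in A \<sigma>) \<subseteq> {x. n \<bullet> x = 0}"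
    by (rule span_minimal) (auto simp: A_in subspace_hyperplane)
  moreover have "dim {x. n \<bullet> x = 0} \<le> dim (span (rvec ` A_in A \<sigma>))"
  proof -
    have "int (CARD('d)) - 1 = aff_dim \<sigma>"
      using assms(3) aff_dim_pos_cone[OF assms(1,2)] by (simp add: facet_of_def)
    also have "\<dots> \<le> aff_dim (span (rvec ` A_in A \<sigma>))"
      using pos_cone_Int_hyperplane_subset_span[OF assms(1) n(2)] n(3) A_in
      by (intro aff_dim_subset) simp
    finally show ?thesis
      using n(1) by (simp add: aff_dim_subspace dim_hyperplane)
  qed
  ultimately show ?thesis
    using that n by (simp add: subspace_dim_equal subspace_hyperplane)
qed

section \<open>Primitive facet forms\<close>

lemma det_Ints: "(\<And>i j. M $ i $ j \<in> \<int>) \<Longrightarrow> det M \<in> \<int>"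
  unfolding det_def by (intro Ints_sum Ints_mult Ints_prod) auto

lemma det_replace_row_eq_inner:
  fixes f :: "'n::finite \<Rightarrow> real ^ 'n"
  shows "det (\<chi> i. if i = k then x else f i) = (\<chi> j. det (\<chi> i. if i = k then axis j 1 else f i)) \<bullet> x"
proof -
  define D where "D x = det (\<chi> i. if i = k then x else f i)" for x
  have "linear D"
  proof (rule linearI)
    show "D (x + y) = D x + D y" for x y
      unfolding D_def using det_row_add[of k "\<lambda>_. x" "\<lambda>_. y" f] by simp
    show "D (c *\<^sub>R x) = c *\<^sub>R D x" for c x
      unfolding D_def using det_row_mul[of k c "\<lambda>_. x" f, unfolded scalar_mult_eq_scaleR] by simp
  qed
  have "D x = D (\<Sum>j\<in>UNIV. x $ j *\<^sub>R axis j 1)"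
    using basis_expansion[of x] by (simp add: scalar_mult_eq_scaleR)
  also have "\<dots> = (\<Sum>j\<in>UNIV. x $ j * D (axis j 1))"
    by (simp add: linear_sum[OF \<open>linear D\<close>] linear_scale[OF \<open>linear D\<close>])
  finally show ?thesis
    by (simp add: D_def inner_vec_def mult.commute)
qed

lemma det_replace_row_ne_0:
  fixes f :: "'n::finite \<Rightarrow> real ^ 'n"
  assumes "bij_betw f (UNIV - {k}) C" "independent C" "x \<notin> span C"
  shows "det (\<chi> i. if i = k then x else f i) \<noteq> 0"
proof -
  have "rows (\<chi> i. if i = k then x else f i) = insert x C"
    using assms(1) by (auto simp: rows_def row_def bij_betw_def)
  moreover have "independent (insert x C)"
    using assms(3,2) by (rule independent_insertI)
  moreover have "x \<notin> C"
    using assms(3) span_base by blast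
  moreover have "card C = CARD('n) - 1"
    using bij_betw_same_card[OF assms(1)] by (simp add: card_Diff_singleton)
  ultimately have "rank (\<chi> i. if i = k then x else f i) = CARD('n)"
    using finiteI_independent[OF assms(2)] by (simp add: row_rank_def dim_eq_card_independent)
  then show ?thesis
    by (simp add: det_eq_0_rank)
qed

text \<open>The normal is the cofactor vector of a basis of the hyperplane, so it is integral.\<close>

lemma hyperplane_integral_normal:
  fixes B :: "(real ^ 'd) set"
  assumes "\<And>b i. b \<in> B \<Longrightarrow> b $ i \<in> \<int>" "dim B = CARD('d) - 1"
  obtains w where "w \<noteq> 0" "\<And>i. w $ i \<in> \<int>" "span B = {x. w \<bullet> x = 0}"
proof -
  obtain C where C: "C \<subseteq> B" "independent C" "B \<subseteq> span C" "card C = dim B"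
    using basis_exists by blast
  have span_C: "span C = span B"
    using C(1,3) span_mono span_minimal[OF _ subspace_span] by blast
  fix k :: 'd
  have "card (UNIV - {k}) = card C"
    using C(4) assms(2) by (simp add: card_Diff_singleton)
  then have "\<exists>f. bij_betw f (UNIV - {k}) C"
    by (intro finite_same_card_bij finiteI_independent[OF C(2)]) simp_all
  then obtain f where f: "bij_betw f (UNIV - {k}) C" ..
  define M where "M x = (\<chi> i. if i = k then x else f i)" for x :: "real ^ 'd"
  define w where "w = (\<chi> j. det (M (axis j 1)))"
  have det_M: "det (M x) = w \<bullet> x" for x
    unfolding M_def w_def by (rule det_replace_row_eq_inner)
  have "f i \<in> B" if "i \<noteq> k" for i
    using f C(1) that by (auto simp: bij_betw_def)
  then have "w $ j \<in> \<int>" for j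
    unfolding w_def M_def vec_lambda_beta by (intro det_Ints) (auto simp: axis_def assms(1))
  have "w \<bullet> b = 0" if b: "b \<in> C" for b
  proof -
    obtain j where "j \<noteq> k" "f j = b"
      using f b unfolding bij_betw_def by auto
    then have "row k (M b) = row j (M b)"
      by (simp add: M_def row_def vec_eq_iff)
    then show ?thesis
      using det_identical_rows[OF \<open>j \<noteq> k\<close>[symmetric]] det_M by metis
  qed
  then have "span C \<subseteq> {x. w \<bullet> x = 0}"
    by (intro span_minimal subspace_hyperplane) auto
  have "dim (span C) < CARD('d)"
    using C(2,4) assms(2) by (simp add: dim_span dim_eq_card_independent)
  then have "span C \<noteq> UNIV"
    by (intro notI) simp
  then obtain x where x: "x \<notin> span C"
    by blast
  then have "w \<noteq> 0"
    using det_M[of x] det_replace_row_ne_0[OF f C(2) x] by (auto simp: M_def)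
  have "dim {x. w \<bullet> x = 0} \<le> dim (span C)"
    using \<open>w \<noteq> 0\<close> C(2,4) assms(2) by (simp add: dim_hyperplane dim_span dim_eq_card_independent)
  then have "span B = {x. w \<bullet> x = 0}"
    using subspace_dim_equal[OF subspace_span subspace_hyperplane \<open>span C \<subseteq> _\<close>] span_C by simp
  then show ?thesis
    using that \<open>w \<noteq> 0\<close> \<open>\<And>j. w $ j \<in> \<int>\<close> by blast
qed

lemma hyperplane_subset_imp_parallel:
  fixes u v :: "'a::real_inner"
  assumes "u \<noteq> 0" "{x. u \<bullet> x = 0} \<subseteq> {x. v \<bullet> x = 0}"
  shows "v = ((v \<bullet> u) / (u \<bullet> u)) *\<^sub>R u"
proof -
  define y where "y = v - ((v \<bullet> u) / (u \<bullet> u)) *\<^sub>R u"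
  have "u \<bullet> y = 0"
    using assms(1) by (simp add: y_def inner_diff_right inner_commute)
  then have "v \<bullet> y = 0"
    using assms(2) by blast
  with \<open>u \<bullet> y = 0\<close> have "y \<bullet> y = 0"
    by (simp add: y_def inner_diff_left inner_commute)
  then show ?thesis
    by (simp add: y_def)
qed

lemma int_subgroup_eq_multiples:
  fixes S :: "int set"
  assumes "x \<in> S" "x \<noteq> 0" "\<And>a b. a \<in> S \<Longrightarrow> b \<in> S \<Longrightarrow> a - b \<in> S"
    "\<And>k a. a \<in> S \<Longrightarrow> k * a \<in> S"
  obtains g where "g > 0" "S = range (\<lambda>k. k * g)"
proof -
  define g where "g = (LEAST n::nat. 0 < n \<and> int n \<in> S)"
  have "\<bar>x\<bar> \<in> S"
    using assms(4)[OF assms(1), of "sgn x"] by (simp add: abs_sgn mult.commute)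
  then have "0 < nat \<bar>x\<bar> \<and> int (nat \<bar>x\<bar>) \<in> S"
    using assms(2) by simp
  then have g: "0 < g" "int g \<in> S"
    unfolding g_def by (metis (mono_tags, lifting) LeastI)+
  have "a \<in> range (\<lambda>k. k * int g)" if "a \<in> S" for a
  proof -
    have "a mod int g \<in> S"
      using assms(3)[OF that assms(4)[OF g(2), of "a div int g"]] by (simp add: minus_div_mult_eq_mod)
    moreover have "0 \<le> a mod int g" "a mod int g < int g"
      using g(1) by simp_all
    ultimately have "a mod int g = 0"
      using not_less_Least[of "nat (a mod int g)" "\<lambda>n. 0 < n \<and> int n \<in> S"] g_def by fastforce
    then show ?thesis
      by (metis mult.commute mod_eq_0_iff_dvd dvdE rangeI)
  qed
  moreover have "range (\<lambda>k. k * int g) \<subseteq> S"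
    using assms(4)[OF g(2)] by auto
  ultimately have "S = range (\<lambda>k. k * int g)"
    by (intro subset_antisym subsetI) auto
  then show ?thesis
    using that[of "int g"] g(1) by simp
qed

lemma integral_form_values_eq_multiples:
  assumes "w \<noteq> 0" "\<And>i. w $ i \<in> \<int>"
  obtains g where "g > 0" "{k. \<exists>z. w \<bullet> rvec z = of_int k} = range (\<lambda>k. k * g)"
proof -
  define S where "S = {k. \<exists>z. w \<bullet> rvec z = of_int k}"
  obtain i where "w $ i \<noteq> 0"
    using assms(1) by (auto simp: vec_eq_iff)
  obtain k where k: "w $ i = of_int k"
    using assms(2) Ints_cases by blast
  have "k \<in> S" "k \<noteq> 0"
    using k \<open>w $ i \<noteq> 0\<close> by (auto simp: S_def intro!: exI[of _ "axis i 1"] simp: rvec_axis inner_axis)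
  moreover have "a - b \<in> S" if ab: "a \<in> S" "b \<in> S" for a b
  proof -
    obtain za zb where "w \<bullet> rvec za = of_int a" "w \<bullet> rvec zb = of_int b"
      using ab by (auto simp: S_def)
    then have "w \<bullet> rvec (za - zb) = of_int (a - b)"
      by (simp add: rvec_diff inner_diff_right)
    then show ?thesis
      by (auto simp: S_def)
  qed
  moreover have "c * a \<in> S" if a: "a \<in> S" for a c
  proof -
    obtain z where "w \<bullet> rvec z = of_int a"
      using a by (auto simp: S_def)
    then have "w \<bullet> rvec (c *s z) = of_int (c * a)"
      by (simp add: rvec_smult)
    then show ?thesis
      by (auto simp: S_def)
  qed
  ultimately obtain g where "g > 0" "S = range (\<lambda>k. k * g)"
    using int_subgroup_eq_multiples by metis
  then show ?thesis
    using that unfolding S_def by blast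
qed

lemma integral_vector_primitive_multiple:
  assumes "w \<noteq> 0" "\<And>i. w $ i \<in> \<int>"
  obtains g :: real where "g > 0" "range (\<lambda>z. (g *\<^sub>R w) \<bullet> rvec z) = \<int>"
proof -
  obtain g where g: "g > 0" "{k. \<exists>z. w \<bullet> rvec z = of_int k} = range (\<lambda>k. k * g)"
    using integral_form_values_eq_multiples[OF assms] by blast
  have "range (\<lambda>z. (inverse (of_int g) *\<^sub>R w) \<bullet> rvec z) = \<int>"
  proof (intro subset_antisym subsetI)
    fix y assume "y \<in> range (\<lambda>z. (inverse (of_int g) *\<^sub>R w) \<bullet> rvec z)"
    then obtain z where y: "y = (w \<bullet> rvec z) / of_int g"
      by (auto simp: field_simps)
    obtain a where "w \<bullet> rvec z = of_int a"
      using inner_rvec_Ints[OF assms(2)] Ints_cases by metis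
    moreover from this have "a \<in> range (\<lambda>k. k * g)"
      using g(2) by blast
    ultimately show "y \<in> \<int>"
      using g(1) y by auto
  next
    fix y :: real assume "y \<in> \<int>"
    then obtain k where k: "y = of_int k"
      by (auto elim: Ints_cases)
    have "k * g \<in> {k. \<exists>z. w \<bullet> rvec z = of_int k}"
      unfolding g(2) by blast
    then obtain z where "w \<bullet> rvec z = of_int (k * g)"
      by blast
    then have "y = (inverse (of_int g) *\<^sub>R w) \<bullet> rvec z"
      using g(1) k by simp
    then show "y \<in> range (\<lambda>z. (inverse (of_int g) *\<^sub>R w) \<bullet> rvec z)"
      by blast
  qed
  then show ?thesis
    using that[of "inverse (of_int g)"] g(1) by simp
qed

lemma facet_of_pos_cone_integral_normal:
  fixes A :: "(int ^ 'd) set"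
  assumes "finite A" "int_span A = UNIV" "\<sigma> facet_of pos_cone A"
  obtains w where "w \<noteq> 0" "\<And>i. w $ i \<in> \<int>" "\<forall>x\<in>pos_cone A. 0 \<le> w \<bullet> x" "\<sigma> \<subseteq> {x. w \<bullet> x = 0}"
    "span (rvec ` A_in A \<sigma>) = {x. w \<bullet> x = 0}"
proof -
  obtain n where n: "n \<noteq> 0" "\<forall>x\<in>pos_cone A. 0 \<le> n \<bullet> x" "\<sigma> \<subseteq> {x. n \<bullet> x = 0}"
    "span (rvec ` A_in A \<sigma>) = {x. n \<bullet> x = 0}"
    using facet_of_pos_cone_span_generators[OF assms] by blast
  have "dim (rvec ` A_in A \<sigma>) = CARD('d) - 1"
    using n(1,4) dim_span[of "rvec ` A_in A \<sigma>"] by (simp add: dim_hyperplane)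
  moreover have "b $ i \<in> \<int>" if "b \<in> rvec ` A_in A \<sigma>" for b i
    using that by (auto simp: rvec_def)
  ultimately obtain w0 where w0: "w0 \<noteq> 0" "\<And>i. w0 $ i \<in> \<int>"
    "span (rvec ` A_in A \<sigma>) = {x. w0 \<bullet> x = 0}"
    using hyperplane_integral_normal by blast
  define t where "t = (n \<bullet> w0) / (w0 \<bullet> w0)"
  have n_eq: "n = t *\<^sub>R w0"
    unfolding t_def using hyperplane_subset_imp_parallel[OF w0(1)] n(4) w0(3) by simp
  define w where "w = (if t > 0 then w0 else - w0)"
  have "t \<noteq> 0"
    using n(1) n_eq by auto
  then have "n \<bullet> x = \<bar>t\<bar> * (w \<bullet> x)" for x
    by (simp add: n_eq w_def)
  then have "0 \<le> w \<bullet> x \<longleftrightarrow> 0 \<le> n \<bullet> x" "w \<bullet> x = 0 \<longleftrightarrow> n \<bullet> x = 0" for x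
    using \<open>t \<noteq> 0\<close> by (simp_all add: zero_le_mult_iff)
  moreover have "w \<noteq> 0" "w $ i \<in> \<int>" for i
    using w0 by (simp_all add: w_def)
  ultimately show ?thesis
    using that n by simp
qed

lemma is_facet_form_exists:
  fixes A :: "(int ^ 'd) set"
  assumes "finite A" "int_span A = UNIV" "\<sigma> facet_of pos_cone A"
  obtains w where "is_facet_form A \<sigma> w" "span (rvec ` A_in A \<sigma>) = {x. w \<bullet> x = 0}"
proof -
  obtain w where w: "w \<noteq> 0" "\<And>i. w $ i \<in> \<int>" "\<forall>x\<in>pos_cone A. 0 \<le> w \<bullet> x"
    "\<sigma> \<subseteq> {x. w \<bullet> x = 0}" "span (rvec ` A_in A \<sigma>) = {x. w \<bullet> x = 0}"
    using facet_of_pos_cone_integral_normal[OF assms] by blast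
  obtain g where g: "g > 0" "range (\<lambda>z. (g *\<^sub>R w) \<bullet> rvec z) = \<int>"
    using integral_vector_primitive_multiple[OF w(1,2)] by blast
  have "is_facet_form A \<sigma> (g *\<^sub>R w)"
    unfolding is_facet_form_def using w(3,4) g by auto
  moreover have "span (rvec ` A_in A \<sigma>) = {x. (g *\<^sub>R w) \<bullet> x = 0}"
    using w(5) g(1) by simp
  ultimately show ?thesis
    using that by blast
qed

lemma is_facet_form_unique:
  assumes "finite A" "int_span A = UNIV" "is_facet_form A \<sigma> w" "is_facet_form A \<sigma> w'"
    "{x. w \<bullet> x = 0} \<subseteq> span \<sigma>"
  shows "w' = w"
proof -
  obtain z1 where z1: "w \<bullet> rvec z1 = 1"
    using assms(3) unfolding is_facet_form_def by (metis Ints_1 imageE)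
  obtain z2 where z2: "w' \<bullet> rvec z2 = 1"
    using assms(4) unfolding is_facet_form_def by (metis Ints_1 imageE)
  have "w \<noteq> 0"
    using z1 by auto
  have "span \<sigma> \<subseteq> {x. w' \<bullet> x = 0}"
    using assms(4) unfolding is_facet_form_def by (intro span_minimal subspace_hyperplane) auto
  then obtain s where s: "w' = s *\<^sub>R w"
    using hyperplane_subset_imp_parallel[OF \<open>w \<noteq> 0\<close>] assms(5) by (meson order_trans)
  have "w' \<bullet> rvec z1 \<in> \<int>" "w \<bullet> rvec z2 \<in> \<int>"
    using assms(3,4) unfolding is_facet_form_def by blast+
  then obtain p q where "s = of_int p" "w \<bullet> rvec z2 = of_int q"
    using s z1 by (auto elim!: Ints_cases)
  then have "p * q = 1"
    using s z2 by (metis inner_scaleR_left of_int_eq_1_iff of_int_mult)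
  then have "p = 1 \<or> p = -1"
    by (rule pos_zmult_eq_1_iff_lemma)
  moreover have "p \<noteq> -1"
  proof
    assume "p = -1"
    have "w \<bullet> rvec a = 0" if "a \<in> A" for a
      using assms(3,4) rvec_in_pos_cone[OF assms(1) that] s \<open>s = of_int p\<close> \<open>p = -1\<close>
      unfolding is_facet_form_def by force
    then have "span (rvec ` A) \<subseteq> {x. w \<bullet> x = 0}"
      by (intro span_minimal subspace_hyperplane) auto
    then have "w \<bullet> rvec z1 = 0"
      using span_rvec_eq_UNIV[OF assms(2)] by blast
    with z1 show False
      by simp
  qed
  ultimately show ?thesis
    using s \<open>s = of_int p\<close> by simp
qed

lemma facet_form:
  fixes A :: "(int ^ 'd) set"
  assumes "finite A" "int_span A = UNIV" "\<sigma> facet_of pos_cone A"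
  shows "is_facet_form A \<sigma> (facet_form A \<sigma>)"
    and "span (rvec ` A_in A \<sigma>) = {x. facet_form A \<sigma> \<bullet> x = 0}"
proof -
  obtain w where w: "is_facet_form A \<sigma> w" "span (rvec ` A_in A \<sigma>) = {x. w \<bullet> x = 0}"
    using is_facet_form_exists[OF assms] by blast
  have "{x. w \<bullet> x = 0} \<subseteq> span \<sigma>"
    using w(2) span_mono[of "rvec ` A_in A \<sigma>" \<sigma>] by (auto simp: A_in_def)
  then have "facet_form A \<sigma> = w"
    unfolding facet_form_def using is_facet_form_unique[OF assms(1,2) w(1)] w(1) by blast
  then show "is_facet_form A \<sigma> (facet_form A \<sigma>)"
    and "span (rvec ` A_in A \<sigma>) = {x. facet_form A \<sigma> \<bullet> x = 0}"
    using w by simp_all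
qed

section \<open>Facet forms and the sets E_sigma\<close>

lemma nonneg_combination_of_consecutive:
  fixes q n :: int
  assumes "0 \<le> q" "q * (q + 1) \<le> n"
  obtains a b where "0 \<le> a" "0 \<le> b" "n = a * (q + 1) + b * q"
proof -
  define t r where "t = n div (q + 1)" and "r = n mod (q + 1)"
  have "q \<le> t"
    unfolding t_def using assms zdiv_mono1[OF assms(2), of "q + 1"] by simp
  moreover have "0 \<le> r" "r < q + 1"
    unfolding r_def using assms(1) pos_mod_bound[of "q + 1" n] by simp_all
  moreover have "n = t * (q + 1) + r"
    unfolding t_def r_def by (rule div_mult_mod_eq[symmetric])
  ultimately show ?thesis
    using that[of "t + r - q" "q + 1 - r"] by (simp add: algebra_simps)
qed

context
  fixes A :: "(int ^ 'd) set" and \<sigma> :: "(real ^ 'd) set"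
  assumes finite_A: "finite A" and span_A: "int_span A = UNIV" and facet: "\<sigma> facet_of pos_cone A"
begin

lemma facet_form_nonneg: "x \<in> pos_cone A \<Longrightarrow> 0 \<le> facet_form A \<sigma> \<bullet> x"
  using facet_form(1)[OF finite_A span_A facet] unfolding is_facet_form_def by blast

lemma range_facet_form: "range (\<lambda>z. facet_form A \<sigma> \<bullet> rvec z) = \<int>"
  using facet_form(1)[OF finite_A span_A facet] unfolding is_facet_form_def by blast

lemma facet_form_rvec_Ints: "facet_form A \<sigma> \<bullet> rvec z \<in> \<int>"
  using range_facet_form by blast

lemma E_set_facet_nonempty_iff:
  "E_set A \<sigma> \<beta> \<noteq> {} \<longleftrightarrow>
    cform (facet_form A \<sigma>) \<beta> \<in> (\<lambda>v. cform (facet_form A \<sigma>) (cvec v)) ` nat_monoid A"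
proof
  have vanish: "facet_form A \<sigma> \<bullet> rvec a = 0" if "a \<in> A_in A \<sigma>" for a
    using that facet_form(1)[OF finite_A span_A facet] by (auto simp: A_in_def is_facet_form_def)
  assume "E_set A \<sigma> \<beta> \<noteq> {}"
  then obtain l v z where l: "l \<in> cplx_span (A_in A \<sigma>)" and v: "v \<in> nat_monoid A"
    and z: "z \<in> int_span (A_in A \<sigma>)" and \<beta>: "\<beta> = l + cvec v + cvec z"
    unfolding E_set_def by (auto simp: cvec_add algebra_simps)
  have "cform (facet_form A \<sigma>) l = 0" "cform (facet_form A \<sigma>) (cvec z) = 0"
    using cform_cplx_span_eq_0[OF vanish] l cvec_in_cplx_span[OF z] by blast+
  then show "cform (facet_form A \<sigma>) \<beta> \<in> (\<lambda>v. cform (facet_form A \<sigma>) (cvec v)) ` nat_monoid A"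
    using v by (simp add: \<beta> cform_add)
next
  assume "cform (facet_form A \<sigma>) \<beta> \<in> (\<lambda>v. cform (facet_form A \<sigma>) (cvec v)) ` nat_monoid A"
  then obtain v where v: "v \<in> nat_monoid A" "cform (facet_form A \<sigma>) (\<beta> - cvec v) = 0"
    by (auto simp: cform_diff)
  have "\<beta> - cvec v \<in> cplx_span (A_in A \<sigma>)"
    using cplx_span_if_cform_eq_0[OF _ _ v(2)] facet_form(2)[OF finite_A span_A facet] finite_A
    by (simp add: A_in_def)
  then have "\<beta> - cvec v \<in> E_set A \<sigma> \<beta>"
    unfolding E_set_def using v(1) int_span_0 by force
  then show "E_set A \<sigma> \<beta> \<noteq> {}"
    by blast
qed

text \<open>The form takes the value 1 on a difference of two monoid elements, so its values on
  the monoid contain two consecutive integers, and hence all large integers.\<close>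

lemma facet_form_nat_monoid_cofinite:
  obtains N where "\<And>n. N \<le> n \<Longrightarrow> \<exists>v\<in>nat_monoid A. facet_form A \<sigma> \<bullet> rvec v = of_int n"
proof -
  let ?F = "\<lambda>v. facet_form A \<sigma> \<bullet> rvec v"
  obtain z where "?F z = 1"
    using range_facet_form by (metis Ints_1 imageE)
  moreover obtain u v where uv: "u \<in> nat_monoid A" "v \<in> nat_monoid A" "z = u - v"
    using int_span_eq_nat_monoid_diff span_A by blast
  moreover obtain q where q: "?F v = of_int q"
    using facet_form_rvec_Ints Ints_cases by metis
  ultimately have Fu: "?F u = of_int (q + 1)"
    by (simp add: rvec_diff inner_diff_right)
  have "0 \<le> q"
    using facet_form_nonneg[OF rvec_nat_monoid_in_pos_cone[OF uv(2)]] q by simp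
  have "\<exists>w\<in>nat_monoid A. ?F w = of_int n" if n: "q * (q + 1) \<le> n" for n
  proof -
    obtain a b where ab: "0 \<le> a" "0 \<le> b" "n = a * (q + 1) + b * q"
      using nonneg_combination_of_consecutive[OF \<open>0 \<le> q\<close> n] by blast
    have "of_nat (nat a) *s u + of_nat (nat b) *s v \<in> nat_monoid A"
      by (intro nat_monoid_add nat_monoid_smult uv)
    moreover have "?F (of_nat (nat a) *s u + of_nat (nat b) *s v) = of_int n"
      using ab Fu q by (simp add: rvec_add rvec_smult inner_add_right)
    ultimately show ?thesis
      by blast
  qed
  then show ?thesis
    using that by blast
qed

end

section \<open>Signed facet forms on an equivalence class\<close>

lemma equiv_class_subset_shifts:
  assumes "finite A" "int_span A = UNIV" "\<beta> \<in> equiv_class A \<alpha>"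
  obtains z where "\<beta> = \<alpha> + cvec z"
proof -
  have "cone_face A (pos_cone A)"
    unfolding cone_face_def using convex_cone_pos_cone[of A]
    by (auto simp: face_of_refl convex_cone_def convex_cone_contains_0)
  moreover have A_in: "A_in A (pos_cone A) = A"
    using rvec_in_pos_cone[OF assms(1)] by (auto simp: A_in_def)
  ultimately have "E_set A (pos_cone A) \<beta> = E_set A (pos_cone A) \<alpha>"
    using assms(3) unfolding equiv_class_def by blast
  moreover have "\<alpha> \<in> E_set A (pos_cone A) \<alpha>"
    unfolding E_set_def A_in cplx_span_UNIV[OF assms(2)]
    using nat_monoid_0[of A] int_span_0[of A] by (force simp: cvec_def vec_eq_iff)
  ultimately obtain v z where "\<beta> - \<alpha> = cvec (v + z)"
    unfolding E_set_def by blast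
  then show ?thesis
    using that[of "v + z"] by (simp add: algebra_simps)
qed

lemma E_set_facet_eq_if_equiv:
  "\<beta> \<in> equiv_class A \<alpha> \<Longrightarrow> \<sigma> facet_of pos_cone A \<Longrightarrow> E_set A \<sigma> \<beta> = E_set A \<sigma> \<alpha>"
  unfolding equiv_class_def cone_face_def facet_of_def by auto

lemma F_plus_facet_form_bounded_below:
  assumes "finite A" "int_span A = UNIV" "\<sigma> \<in> F_plus A \<alpha>"
  obtains c where "\<And>z. \<alpha> + cvec z \<in> equiv_class A \<alpha> \<Longrightarrow> c \<le> facet_form A \<sigma> \<bullet> rvec z"
proof -
  let ?F = "facet_form A \<sigma>"
  have facet: "\<sigma> facet_of pos_cone A"
    using assms(3) by (simp add: F_plus_def)
  obtain v0 where v0: "v0 \<in> nat_monoid A" "cform ?F \<alpha> = cform ?F (cvec v0)"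
    using assms(3) by (auto simp: F_plus_def)
  have "- (?F \<bullet> rvec v0) \<le> ?F \<bullet> rvec z" if "\<alpha> + cvec z \<in> equiv_class A \<alpha>" for z
  proof -
    have "E_set A \<sigma> \<alpha> \<noteq> {}"
      using E_set_facet_nonempty_iff[OF assms(1,2) facet] v0 by blast
    then have "E_set A \<sigma> (\<alpha> + cvec z) \<noteq> {}"
      using E_set_facet_eq_if_equiv[OF that facet] by simp
    then obtain v where v: "v \<in> nat_monoid A" "cform ?F (\<alpha> + cvec z) = cform ?F (cvec v)"
      using E_set_facet_nonempty_iff[OF assms(1,2) facet] by blast
    then have "(of_real (?F \<bullet> rvec v0 + ?F \<bullet> rvec z) :: complex) = of_real (?F \<bullet> rvec v)"
      using v0(2) by (simp add: cform_shift cform_cvec)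
    then have "?F \<bullet> rvec v0 + ?F \<bullet> rvec z = ?F \<bullet> rvec v"
      by (simp only: of_real_eq_iff)
    moreover have "0 \<le> ?F \<bullet> rvec v"
      using facet_form_nonneg[OF assms(1,2) facet rvec_nat_monoid_in_pos_cone[OF v(1)]] .
    ultimately show ?thesis
      by linarith
  qed
  then show ?thesis
    using that by blast
qed

lemma F_minus_facet_form_bounded_above:
  assumes "finite A" "int_span A = UNIV" "\<sigma> \<in> F_minus A \<alpha>"
  obtains c where "\<And>z. \<alpha> + cvec z \<in> equiv_class A \<alpha> \<Longrightarrow> facet_form A \<sigma> \<bullet> rvec z \<le> c"
proof -
  let ?F = "facet_form A \<sigma>"
  have facet: "\<sigma> facet_of pos_cone A"
    using assms(3) by (simp add: F_minus_def)
  obtain m where m: "cform ?F \<alpha> = of_int m"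
    using assms(3) by (auto simp: F_minus_def elim: Ints_cases)
  have "E_set A \<sigma> \<alpha> = {}"
    using assms(3) E_set_facet_nonempty_iff[OF assms(1,2) facet] by (auto simp: F_minus_def)
  obtain N where N: "\<And>n. N \<le> n \<Longrightarrow> \<exists>v\<in>nat_monoid A. ?F \<bullet> rvec v = of_int n"
    using facet_form_nat_monoid_cofinite[OF assms(1,2) facet] by blast
  have "?F \<bullet> rvec z \<le> of_int (N - m)" if "\<alpha> + cvec z \<in> equiv_class A \<alpha>" for z
  proof (rule ccontr)
    assume "\<not> ?thesis"
    obtain k where k: "?F \<bullet> rvec z = of_int k"
      using facet_form_rvec_Ints[OF assms(1,2) facet] Ints_cases by metis
    with \<open>\<not> ?thesis\<close> obtain v where v: "v \<in> nat_monoid A" "?F \<bullet> rvec v = of_int (m + k)"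
      using N[of "m + k"] by auto
    then have "cform ?F (\<alpha> + cvec z) = cform ?F (cvec v)"
      using m k by (simp add: cform_shift cform_cvec)
    then have "E_set A \<sigma> (\<alpha> + cvec z) \<noteq> {}"
      using E_set_facet_nonempty_iff[OF assms(1,2) facet] v(1) by blast
    then show False
      using E_set_facet_eq_if_equiv[OF that facet] \<open>E_set A \<sigma> \<alpha> = {}\<close> by simp
  qed
  then show ?thesis
    using that by blast
qed

definition signed_facet_forms :: "(int ^ 'd) set \<Rightarrow> complex ^ 'd \<Rightarrow> (real ^ 'd) set" where
  "signed_facet_forms A \<alpha> = facet_form A ` F_plus A \<alpha> \<union> (\<lambda>\<sigma>. - facet_form A \<sigma>) ` F_minus A \<alpha>"

lemma R_pos_eq_signed_facet_forms: "R_pos A \<alpha> = {\<gamma>. \<forall>u\<in>signed_facet_forms A \<alpha>. 0 < u \<bullet> \<gamma>}"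
proof -
  have "(\<forall>u\<in>signed_facet_forms A \<alpha>. 0 < u \<bullet> \<gamma>) \<longleftrightarrow>
      (\<forall>\<sigma>\<in>F_plus A \<alpha>. 0 < facet_form A \<sigma> \<bullet> \<gamma>) \<and> (\<forall>\<sigma>\<in>F_minus A \<alpha>. facet_form A \<sigma> \<bullet> \<gamma> < 0)" for \<gamma>
    unfolding signed_facet_forms_def ball_Un Ball_image_comp by (simp add: o_def)
  then show ?thesis
    by (auto simp: R_pos_def inner_commute)
qed

lemma finite_signed_facet_forms:
  assumes "finite A"
  shows "finite (signed_facet_forms A \<alpha>)"
proof -
  have "F_plus A \<alpha> \<subseteq> {\<sigma>. \<sigma> facet_of pos_cone A}" "F_minus A \<alpha> \<subseteq> {\<sigma>. \<sigma> facet_of pos_cone A}"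
    by (auto simp: F_plus_def F_minus_def)
  then show ?thesis
    unfolding signed_facet_forms_def
    using finite_polyhedron_facets[OF polyhedron_pos_cone[OF assms]] by (auto intro: finite_subset)
qed

lemma signed_facet_form_bounded_below:
  assumes "finite A" "int_span A = UNIV" "u \<in> signed_facet_forms A \<alpha>"
  obtains c where "\<And>z. \<alpha> + cvec z \<in> equiv_class A \<alpha> \<Longrightarrow> c \<le> u \<bullet> rvec z"
proof (cases "u \<in> facet_form A ` F_plus A \<alpha>")
  case True
  then show ?thesis
    using F_plus_facet_form_bounded_below[OF assms(1,2)] that by blast
next
  case False
  then obtain \<sigma> where "\<sigma> \<in> F_minus A \<alpha>" "u = - facet_form A \<sigma>"
    using assms(3) by (auto simp: signed_facet_forms_def)
  moreover obtain c where "\<And>z. \<alpha> + cvec z \<in> equiv_class A \<alpha> \<Longrightarrow> facet_form A \<sigma> \<bullet> rvec z \<le> c"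
    using F_minus_facet_form_bounded_above[OF assms(1,2) \<open>\<sigma> \<in> F_minus A \<alpha>\<close>] by blast
  ultimately show ?thesis
    using that[of "- c"] by force
qed

lemma signed_facet_form_integral:
  assumes "finite A" "int_span A = UNIV" "u \<in> signed_facet_forms A \<alpha>"
  shows "u \<noteq> 0" and "u \<bullet> rvec z \<in> \<int>"
proof -
  obtain \<sigma> where "\<sigma> facet_of pos_cone A" and u: "u = facet_form A \<sigma> \<or> u = - facet_form A \<sigma>"
    using assms(3) by (auto simp: signed_facet_forms_def F_plus_def F_minus_def)
  then have range: "range (\<lambda>z. facet_form A \<sigma> \<bullet> rvec z) = \<int>"
    using range_facet_form[OF assms(1,2)] by blast
  then obtain z1 where "facet_form A \<sigma> \<bullet> rvec z1 = 1"
    by (metis Ints_1 imageE)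
  then show "u \<noteq> 0"
    using u by auto
  show "u \<bullet> rvec z \<in> \<int>"
    using u range by (auto intro: Ints_minus)
qed

lemma positive_direction_if_zero_notin_convex_hull:
  fixes U :: "'a::euclidean_space set"
  assumes "finite U" "0 \<notin> convex hull U"
  obtains \<gamma> where "\<forall>u\<in>U. 0 < u \<bullet> \<gamma>"
proof -
  have "closed (convex hull U)"
    by (intro compact_imp_closed compact_convex_hull finite_imp_compact assms(1))
  then obtain a b where "0 < b" "\<forall>x\<in>convex hull U. b < a \<bullet> x"
    using separating_hyperplane_closed_0[OF convex_convex_hull _ assms(2)] by blast
  then have "\<forall>u\<in>U. 0 < u \<bullet> a"
    by (metis hull_inc inner_commute order_less_trans)
  then show ?thesis
    using that by blast
qed

text \<open>In a convex relation \<open>\<Sum> l\<^sub>u u = 0\<close> the term of one \<open>u\<close> with \<open>l\<^sub>u > 0\<close> is minus the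
  sum of the others, so lower bounds for all terms give an upper bound for it.\<close>

lemma bounded_above_if_zero_in_convex_hull:
  fixes U :: "'a::real_inner set" and f :: "'b \<Rightarrow> 'a"
  assumes "finite U" "0 \<in> convex hull U" "\<And>u. u \<in> U \<Longrightarrow> \<exists>c. \<forall>i\<in>I. c \<le> u \<bullet> f i"
  obtains u c where "u \<in> U" "\<forall>i\<in>I. u \<bullet> f i \<le> c"
proof -
  obtain l where l: "\<forall>u\<in>U. 0 \<le> l u" "sum l U = 1" "(\<Sum>u\<in>U. l u *\<^sub>R u) = 0"
    using assms(2) unfolding convex_hull_finite[OF assms(1)] by blast
  obtain c where c: "\<forall>u\<in>U. \<forall>i\<in>I. c u \<le> u \<bullet> f i"
    using assms(3) by metis
  obtain u0 where u0: "u0 \<in> U" "0 < l u0"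
    using l(1,2) by (metis less_eq_real_def sum.neutral zero_neq_one)
  define C where "C = - (\<Sum>u\<in>U - {u0}. l u * c u)"
  have bound: "l u0 * (u0 \<bullet> f i) \<le> C" if "i \<in> I" for i
  proof -
    have "l u0 * (u0 \<bullet> f i) + (\<Sum>u\<in>U - {u0}. l u * (u \<bullet> f i)) = (\<Sum>u\<in>U. l u *\<^sub>R u) \<bullet> f i"
      using assms(1) u0(1) by (simp add: inner_sum_left inner_add_left sum.remove)
    also have "\<dots> = 0"
      using l(3) by simp
    moreover have "(\<Sum>u\<in>U - {u0}. l u * c u) \<le> (\<Sum>u\<in>U - {u0}. l u * (u \<bullet> f i))"
      using l(1) c that by (intro sum_mono mult_left_mono) auto
    ultimately show ?thesis
      unfolding C_def by linarith
  qed
  have "\<forall>i\<in>I. u0 \<bullet> f i \<le> C / l u0"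
    using bound u0(2) by (simp add: pos_le_divide_eq mult.commute)
  then show ?thesis
    using that u0(1) by blast
qed

text \<open>On such a set \<open>cform u\<close> takes only finitely many values.\<close>

lemma zariski_closure_bounded_lattice_shifts:
  assumes "u \<noteq> 0" "\<And>z. u \<bullet> rvec z \<in> \<int>"
    "\<And>\<beta>. \<beta> \<in> S \<Longrightarrow> \<exists>z. \<beta> = \<alpha> + cvec z \<and> c1 \<le> u \<bullet> rvec z \<and> u \<bullet> rvec z \<le> c2"
  shows "zariski_closure S \<noteq> UNIV"
proof (rule zariski_closure_subset_cform_finite_values[OF assms(1)])
  show "finite ((\<lambda>k. cform u \<alpha> + of_int k) ` {\<lceil>c1\<rceil>..\<lfloor>c2\<rfloor>})"
    by simp
  fix \<beta> assume "\<beta> \<in> S"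
  then obtain z where z: "\<beta> = \<alpha> + cvec z" "c1 \<le> u \<bullet> rvec z" "u \<bullet> rvec z \<le> c2"
    using assms(3) by blast
  obtain k where k: "u \<bullet> rvec z = of_int k"
    using assms(2) Ints_cases by metis
  then have "k \<in> {\<lceil>c1\<rceil>..\<lfloor>c2\<rfloor>}"
    using z(2,3) by (simp add: ceiling_le_iff le_floor_iff)
  moreover have "cform u \<beta> = cform u \<alpha> + of_int k"
    using z(1) k by (simp add: cform_add cform_cvec)
  ultimately show "cform u \<beta> \<in> (\<lambda>k. cform u \<alpha> + of_int k) ` {\<lceil>c1\<rceil>..\<lfloor>c2\<rfloor>}"
    by blast
qed

lemma R_pos_nonempty_if_zero_notin_convex_hull:
  assumes "finite A" "0 \<notin> convex hull signed_facet_forms A \<alpha>"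
  shows "R_pos A \<alpha> \<noteq> {}"
proof -
  obtain \<gamma> where "\<forall>u\<in>signed_facet_forms A \<alpha>. 0 < u \<bullet> \<gamma>"
    using positive_direction_if_zero_notin_convex_hull[OF finite_signed_facet_forms[OF assms(1)] assms(2)] .
  then have "\<gamma> \<in> R_pos A \<alpha>"
    unfolding R_pos_eq_signed_facet_forms by (rule CollectI)
  then show ?thesis
    by blast
qed

lemma zariski_closure_equiv_class_ne_UNIV_if_zero_in_convex_hull:
  assumes "finite A" "int_span A = UNIV" "0 \<in> convex hull signed_facet_forms A \<alpha>"
  shows "zariski_closure (equiv_class A \<alpha>) \<noteq> UNIV"
proof -
  let ?Z = "{z. \<alpha> + cvec z \<in> equiv_class A \<alpha>}"
  have "\<exists>c. \<forall>z\<in>?Z. c \<le> u \<bullet> rvec z" if u: "u \<in> signed_facet_forms A \<alpha>" for u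
  proof -
    obtain c where "\<And>z. \<alpha> + cvec z \<in> equiv_class A \<alpha> \<Longrightarrow> c \<le> u \<bullet> rvec z"
      using signed_facet_form_bounded_below[OF assms(1,2) u] by blast
    then show ?thesis
      by auto
  qed
  then obtain u c2 where u: "u \<in> signed_facet_forms A \<alpha>" and c2: "\<forall>z\<in>?Z. u \<bullet> rvec z \<le> c2"
    using bounded_above_if_zero_in_convex_hull[OF finite_signed_facet_forms[OF assms(1)] assms(3)] by blast
  obtain c1 where c1: "\<And>z. \<alpha> + cvec z \<in> equiv_class A \<alpha> \<Longrightarrow> c1 \<le> u \<bullet> rvec z"
    using signed_facet_form_bounded_below[OF assms(1,2) u] by blast
  show ?thesis
  proof (rule zariski_closure_bounded_lattice_shifts)
    show "u \<noteq> 0" "\<And>z. u \<bullet> rvec z \<in> \<int>"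
      using signed_facet_form_integral[OF assms(1,2) u] by auto
    fix \<beta> assume \<beta>: "\<beta> \<in> equiv_class A \<alpha>"
    then obtain z where z: "\<beta> = \<alpha> + cvec z"
      using equiv_class_subset_shifts[OF assms(1,2)] by blast
    then have "c1 \<le> u \<bullet> rvec z" "u \<bullet> rvec z \<le> c2"
      using c1 c2 \<beta> by simp_all
    then show "\<exists>z. \<beta> = \<alpha> + cvec z \<and> c1 \<le> u \<bullet> rvec z \<and> u \<bullet> rvec z \<le> c2"
      using z by blast
  qed
qed

theorem proposition8p16:
  fixes A :: "(int ^ 'd) set" and \<alpha> :: "complex ^ 'd"
  assumes "finite A"
    and "int_span A = UNIV"
    and "zariski_closure (equiv_class A \<alpha>) = UNIV"
  shows "R_pos A \<alpha> \<noteq> {}"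
proof (cases "0 \<in> convex hull signed_facet_forms A \<alpha>")
  case True
  then show ?thesis
    using zariski_closure_equiv_class_ne_UNIV_if_zero_in_convex_hull[OF assms(1,2)] assms(3) by blast
next
  case False
  then show ?thesis
    using R_pos_nonempty_if_zero_notin_convex_hull[OF assms(1)] by blast
qed

end
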